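(* Let $r\ge1$ and $G\subset\mathbb{Z}_2^r$ a subgroup with $1^r=(1,\dots,1)\in G$. Then: (1) if $\dim G=1$, then $G=\langle1^r\rangle$; (2) if $\dim G=r$, then $G=\mathbb{Z}_2^r$; (3) if $\dim G=2$, then $G$ is decomposable; (4) if $\dim G=r-1$ and $G$ is indecomposable, then $r$ is even and $G=G_r^{\rm even}$.
   Context: $\dim G$ is the dimension over $\mathbb{Z}_2$. For $I\subset\{1,\dots,r\}$ let $\mathbb{Z}_2^I$ be the codewords supported in $I$. $G$ is decomposable if there is a partition $\{1,\dots,r\}=I\sqcup J$ with $I,J$ nonempty and $G=(G\cap\mathbb{Z}_2^I)\oplus(G\cap\mathbb{Z}_2^J)$ (i.e. $G$ is an orthogonal direct sum $G_1\perp G_2$ of codes on complementary coordinate sets); indecomposable otherwise. For even $r$, $G_r^{\rm even}=\{g\in\mathbb{Z}_2^r: g \text{ has an even number of nonzero coordinates}\}$. *)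

theory Defs
  imports "HOL-Analysis.Analysis" "HOL-Library.Z2"
begin

text \<open>Vectors of Z_2^r are modelled as bit ^ 'n with r = CARD('n); coordinates are indexed by 'n.\<close>

definition is_subgroup_Z2 :: "(bit ^ 'n) set \<Rightarrow> bool" where
  "is_subgroup_Z2 G \<longleftrightarrow> 0 \<in> G \<and> (\<forall>x\<in>G. \<forall>y\<in>G. x + y \<in> G) \<and> (\<forall>x\<in>G. - x \<in> G)"

definition dimZ2 :: "(bit ^ 'n) set \<Rightarrow> nat" where
  "dimZ2 G = vector_space.dim ((*s) :: bit \<Rightarrow> bit ^ 'n \<Rightarrow> bit ^ 'n) G"

definition supported_in :: "'n set \<Rightarrow> (bit ^ 'n) set" where
  "supported_in I = {v. \<forall>i. i \<notin> I \<longrightarrow> v $ i = 0}"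

definition decomposable_Z2 :: "(bit ^ 'n) set \<Rightarrow> bool" where
  "decomposable_Z2 G \<longleftrightarrow> (\<exists>I J. I \<inter> J = {} \<and> I \<union> J = UNIV \<and> I \<noteq> {} \<and> J \<noteq> {} \<and>
      G = {x + y | x y. x \<in> G \<inter> supported_in I \<and> y \<in> G \<inter> supported_in J})"

definition ones_Z2 :: "bit ^ 'n" where
  "ones_Z2 = (\<chi> i. 1)"

definition G_even :: "(bit ^ 'n) set" where
  "G_even = {g. even (card {i. g $ i \<noteq> 0})}"

end

theory Submission
  imports Defs
begin

text \<open>A subgroup of \<open>\<int>\<^sub>2\<^sup>r\<close> is a \<open>\<int>\<^sub>2\<close>-subspace, so dimensions 1 and r pin it down, and in
  dimension 2 it is \<open>{0, 1\<^sup>r, g, 1\<^sup>r + g}\<close>, which splits along the support of g.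
  A subgroup splits along a coordinate set I as soon as it is closed under restriction to I;
  hence an indecomposable G contains no unit vector \<open>e\<^sub>i\<close>. If G moreover has codimension 1,
  then \<open>G + e\<^sub>i\<close> is the whole space, so every \<open>e\<^sub>a + e\<^sub>b\<close> lies in G. By induction on the
  support, every vector then differs from an element of G by 0 or by a fixed \<open>e\<^sub>j\<close> according
  to the parity of its weight; thus G is the even-weight code, and \<open>1\<^sup>r \<in> G\<close> forces r to
  be even.\<close>

lemma bit_zero_or_one: "(c::bit) = 0 \<or> c = 1"
  by (cases "c = 0") simp_all

lemma UNIV_bit: "UNIV = {0, 1 :: bit}"
  using bit_zero_or_one by auto

lemma bit_vec_add_self [simp]: "(x::bit^'n) + x = 0"
  by (simp add: vec_eq_iff)

lemma bit_vec_diff_eq_add: "(x::bit^'n) - y = x + y"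
  by (simp add: vec_eq_iff)

lemma bit_vec_add_eq_iff: "(x::bit^'n) + y = z \<longleftrightarrow> x = z + y"
  by (auto simp: add.assoc)

lemma ones_Z2_neq_0: "(ones_Z2 :: bit^'n) \<noteq> 0"
  by (simp add: ones_Z2_def vec_eq_iff)

lemma ones_Z2_in_G_even_iff: "(ones_Z2 :: bit^'n) \<in> G_even \<longleftrightarrow> even CARD('n)"
  by (simp add: ones_Z2_def G_even_def)

lemma subspace_if_is_subgroup_Z2:
  fixes G :: "(bit^'n) set"
  assumes "is_subgroup_Z2 G"
  shows "vec.subspace G"
proof -
  have "c *s x \<in> G" if "x \<in> G" for c x
    using bit_zero_or_one[of c] that assms unfolding is_subgroup_Z2_def by auto
  then show ?thesis
    using assms unfolding vec.subspace_def is_subgroup_Z2_def by auto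
qed

lemma vec_span_singleton_Z2: "vec.span {v :: bit^'n} = {0, v}"
  by (simp add: vec.span_singleton UNIV_bit)

lemma vec_span_pair_Z2: "vec.span {u, v :: bit^'n} = {0, u, v, u + v}"
proof -
  have "x - k *s u \<in> {0, v} \<longleftrightarrow> x = k *s u \<or> x = k *s u + v" for x and k :: bit
    by (simp only: insert_iff empty_iff bit_vec_diff_eq_add bit_vec_add_eq_iff
        add_0_left add.commute[of v] simp_thms)
  then have "vec.span {u, v} = {x. \<exists>k::bit. x = k *s u \<or> x = k *s u + v}"
    unfolding vec.span_insert[of u "{v}"] vec_span_singleton_Z2 by simp
  also have "\<dots> = {0, u, v, u + v}"
    using bit_zero_or_one by auto (metis vector_smult_lid)+
  finally show ?thesis .
qed

lemma subspace_eq_UNIV_if_dim_eq_card: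
  fixes G :: "('a::field^'n) set"
  assumes "vec.subspace G" and "vec.dim G = CARD('n)"
  shows "G = UNIV"
proof -
  have "vec.span G = UNIV"
    using assms(2) vec.dim_eq_full[of G] by (simp add: vec.dimension_def card_cart_basis)
  then show ?thesis
    using assms(1) by (metis vec.span_eq_iff)
qed

lemma subspace_eq_if_dim_1:
  fixes G :: "(bit^'n) set"
  assumes "vec.subspace G" and "v \<in> G" and "v \<noteq> 0" and "vec.dim G = 1"
  shows "G = {0, v}"
proof -
  have "vec.span {v} = vec.span G"
    using assms by (intro vec.dim_eq_span) auto
  also have "\<dots> = G"
    using assms(1) by simp
  finally show ?thesis
    by (simp add: vec_span_singleton_Z2)
qed

lemma subspace_dim_2_obtain:
  fixes G :: "(bit^'n) set"
  assumes "vec.subspace G" and "u \<in> G" and "u \<noteq> 0" and "vec.dim G = 2"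
  obtains g where "g \<notin> {0, u}" and "G = {0, u, g, u + g}"
proof -
  obtain g where g: "g \<in> G" "g \<notin> vec.span {u}"
    using vec.dim_subset[of G "vec.span {u}"] assms by force
  then have "u \<notin> vec.span {g}" and "g \<noteq> 0"
    using assms(3) by (auto simp: vec_span_singleton_Z2)
  then have "vec.dim {u, g} = 2"
    by (simp add: vec.dim_insert)
  then have "vec.span {u, g} = vec.span G"
    using assms g by (intro vec.dim_eq_span) auto
  also have "\<dots> = G"
    using assms(1) by simp
  finally show ?thesis
    using that g by (simp add: vec_span_pair_Z2 vec_span_singleton_Z2)
qed

definition restrict_coords :: "'n set \<Rightarrow> ('a::zero)^'n \<Rightarrow> 'a^'n" where
  "restrict_coords I v = (\<chi> i. if i \<in> I then v $ i else 0)"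

lemma restrict_coords_in_supported_in: "restrict_coords I v \<in> supported_in I"
  by (simp add: restrict_coords_def supported_in_def)

lemma restrict_coords_add:
  "restrict_coords I (v + w) = restrict_coords I v + restrict_coords I (w :: ('a::monoid_add)^'n)"
  by (simp add: restrict_coords_def vec_eq_iff)

lemma restrict_coords_add_compl:
  "restrict_coords I v + restrict_coords (- I) v = (v :: ('a::monoid_add)^'n)"
  by (simp add: restrict_coords_def vec_eq_iff)

lemma decomposable_Z2I:
  fixes G :: "(bit^'n) set"
  assumes "is_subgroup_Z2 G" and "I \<noteq> {}" and "I \<noteq> UNIV"
    and "\<And>v. v \<in> G \<Longrightarrow> restrict_coords I v \<in> G"
  shows "decomposable_Z2 G"
proof -
  have add: "x + y \<in> G" if "x \<in> G" and "y \<in> G" for x y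
    using assms(1) that by (simp add: is_subgroup_Z2_def)
  have "G = {x + y | x y. x \<in> G \<inter> supported_in I \<and> y \<in> G \<inter> supported_in (- I)}"
  proof
    show "G \<subseteq> {x + y | x y. x \<in> G \<inter> supported_in I \<and> y \<in> G \<inter> supported_in (- I)}"
    proof
      fix v
      assume "v \<in> G"
      moreover have "restrict_coords (- I) v = v + restrict_coords I v"
        by (simp add: restrict_coords_def vec_eq_iff)
      ultimately have "restrict_coords I v \<in> G" and "restrict_coords (- I) v \<in> G"
        using assms(4) add by simp_all
      then show "v \<in> {x + y | x y. x \<in> G \<inter> supported_in I \<and> y \<in> G \<inter> supported_in (- I)}"
        using restrict_coords_add_compl[of I v, symmetric] restrict_coords_in_supported_in by blast
    qed
    show "{x + y | x y. x \<in> G \<inter> supported_in I \<and> y \<in> G \<inter> supported_in (- I)} \<subseteq> G"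
      using add by blast
  qed
  then show ?thesis
    unfolding decomposable_Z2_def using assms(2,3) by (intro exI[of _ I] exI[of _ "- I"]) auto
qed

lemma decomposable_Z2_if_dim_2:
  fixes G :: "(bit^'n) set"
  assumes "is_subgroup_Z2 G" and "ones_Z2 \<in> G" and "dimZ2 G = 2"
  shows "decomposable_Z2 G"
proof -
  have "vec.dim G = 2"
    using assms(3) by (simp add: dimZ2_def)
  then obtain g where g: "g \<notin> {0, ones_Z2}" and G: "G = {0, ones_Z2, g, ones_Z2 + g}"
    by (rule subspace_dim_2_obtain[OF subspace_if_is_subgroup_Z2[OF assms(1)] assms(2) ones_Z2_neq_0])
  define I where "I = {i. g $ i \<noteq> 0}"
  have "restrict_coords I 0 = 0" "restrict_coords I ones_Z2 = g" "restrict_coords I g = g"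
    by (auto simp: I_def restrict_coords_def ones_Z2_def vec_eq_iff)
  moreover from this have "restrict_coords I (ones_Z2 + g) = 0"
    by (simp add: restrict_coords_add)
  ultimately have "restrict_coords I v \<in> G" if "v \<in> G" for v
    using that by (auto simp: G)
  moreover have "I \<noteq> {}"
    using g by (auto simp: I_def vec_eq_iff)
  moreover have "I \<noteq> UNIV"
  proof
    assume "I = UNIV"
    then have "g = ones_Z2"
      by (auto simp: I_def ones_Z2_def vec_eq_iff)
    then show False
      using g by simp
  qed
  ultimately show ?thesis
    using decomposable_Z2I[OF assms(1)] by blast
qed

lemma axis_notin_if_not_decomposable_Z2:
  fixes G :: "(bit^'n) set"
  assumes "is_subgroup_Z2 G" and "\<not> decomposable_Z2 G" and "CARD('n) \<ge> 2"
  shows "axis i 1 \<notin> G"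
proof
  assume "axis i 1 \<in> G"
  moreover have "restrict_coords {i} v = (v $ i) *s axis i 1" for v :: "bit^'n"
    by (simp add: restrict_coords_def axis_def vec_eq_iff)
  ultimately have "restrict_coords {i} v \<in> G" for v
    using vec.subspace_scale[OF subspace_if_is_subgroup_Z2[OF assms(1)]] by simp
  moreover have "{i} \<noteq> UNIV"
  proof
    assume "{i} = UNIV"
    then have "CARD('n) = card {i}"
      by simp
    then show False
      using assms(3) by simp
  qed
  ultimately have "decomposable_Z2 G"
    by (intro decomposable_Z2I[OF assms(1)]) auto
  then show False
    using assms(2) by contradiction
qed

lemma subspace_codim_1_mem_or_add_mem:
  fixes G :: "(bit^'n) set"
  assumes "vec.subspace G" and "vec.dim G = CARD('n) - 1" and "w \<notin> G"
  shows "v \<in> G \<or> v + w \<in> G"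
proof -
  have "w \<notin> vec.span G"
    using assms(1,3) by (metis vec.span_eq_iff)
  then have "vec.dim (insert w G) = CARD('n)"
    using assms(2) by (simp add: vec.dim_insert)
  then have "vec.span (insert w G) = UNIV"
    using subspace_eq_UNIV_if_dim_eq_card[OF vec.subspace_span] vec.dim_span by metis
  then obtain k where "v - k *s w \<in> G"
    using assms(1) by (metis UNIV_I vec.span_breakdown_eq vec.span_eq_iff)
  then show ?thesis
    using bit_zero_or_one[of k] by (auto simp: bit_vec_diff_eq_add)
qed

lemma indicator_vec_plus_parity_mem:
  fixes G :: "(bit^'n) set"
  assumes "vec.subspace G" and "\<And>a b. axis a 1 + axis b 1 \<in> G"
  shows "(\<chi> i. of_bool (i \<in> S)) + (if even (card S) then 0 else axis j 1) \<in> G"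
proof -
  have "finite S" by simp
  then show ?thesis
  proof (induction S rule: finite_induct)
    case empty
    have "(\<chi> i. of_bool (i \<in> {})) = (0 :: bit^'n)"
      by (simp add: vec_eq_iff)
    then show ?case
      using vec.subspace_0[OF assms(1)] by simp
  next
    case (insert a S)
    let ?c = "\<chi> i. of_bool (i \<in> S) :: bit^'n"
    have c: "(\<chi> i. of_bool (i \<in> insert a S)) = ?c + axis a 1"
      using insert.hyps(2) by (auto simp: vec_eq_iff axis_def)
    have card: "card (insert a S) = Suc (card S)"
      using insert.hyps by simp
    show ?case
    proof (cases "even (card S)")
      case True
      then have "?c \<in> G"
        using insert.IH by simp
      then have "?c + (axis a 1 + axis j 1) \<in> G"
        using vec.subspace_add[OF assms(1) _ assms(2)] by blast
      then show ?thesis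
        unfolding c card using True by (simp add: add.assoc)
    next
      case False
      then have "?c + axis j 1 \<in> G"
        using insert.IH by simp
      then have "(?c + axis j 1) + (axis j 1 + axis a 1) \<in> G"
        using vec.subspace_add[OF assms(1) _ assms(2)] by blast
      moreover have "(?c + axis j 1) + (axis j 1 + axis a 1) = ?c + axis a 1"
        by (metis add.assoc bit_vec_add_self add.left_neutral)
      ultimately show ?thesis
        unfolding c card using False by simp
    qed
  qed
qed

lemma subspace_eq_G_even:
  fixes G :: "(bit^'n) set"
  assumes "vec.subspace G" and "vec.dim G = CARD('n) - 1" and "\<And>i. axis i 1 \<notin> G"
  shows "G = G_even"
proof -
  have pairs: "axis a 1 + axis b 1 \<in> G" for a b
    using subspace_codim_1_mem_or_add_mem[OF assms(1,2) assms(3)] assms(3) by blast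
  fix j :: 'n
  have "v \<in> G \<longleftrightarrow> even (card {i. v $ i \<noteq> 0})" for v :: "bit^'n"
  proof -
    let ?S = "{i. v $ i \<noteq> 0}"
    have "(\<chi> i. of_bool (i \<in> ?S)) = v"
      by (simp add: vec_eq_iff)
    then have v: "v + (if even (card ?S) then 0 else axis j 1) \<in> G"
      using indicator_vec_plus_parity_mem[OF assms(1) pairs] by metis
    show ?thesis
    proof (cases "even (card ?S)")
      case True
      then show ?thesis
        using v by simp
    next
      case False
      have "v \<notin> G"
      proof
        assume "v \<in> G"
        moreover have "v + axis j 1 \<in> G"
          using v False by simp
        ultimately have "v + (v + axis j 1) \<in> G"
          by (rule vec.subspace_add[OF assms(1)])
        then show False
          using assms(3) by (metis add.assoc bit_vec_add_self add.left_neutral)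
      qed
      then show ?thesis
        using False by simp
    qed
  qed
  then show ?thesis
    unfolding G_even_def by auto
qed

theorem mainTheorem17:
  fixes G :: "(bit ^ 'n) set"
  assumes "is_subgroup_Z2 G" and "ones_Z2 \<in> G"
  shows "(dimZ2 G = 1 \<longrightarrow> G = {0, ones_Z2})
       \<and> (dimZ2 G = CARD('n) \<longrightarrow> G = UNIV)
       \<and> (dimZ2 G = 2 \<longrightarrow> decomposable_Z2 G)
       \<and> (dimZ2 G = CARD('n) - 1 \<and> \<not> decomposable_Z2 G \<longrightarrow> even (CARD('n)) \<and> G = G_even)"
proof -
  have G: "vec.subspace G"
    using assms(1) by (rule subspace_if_is_subgroup_Z2)
  have dim: "dimZ2 G = vec.dim G"
    by (simp add: dimZ2_def)
  have "vec.dim G \<ge> 1"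
    using vec.dim_subset[of "{ones_Z2}" G] assms(2) by (simp add: ones_Z2_neq_0)
  have G_eq_G_even: "G = G_even" if "dimZ2 G = CARD('n) - 1" and "\<not> decomposable_Z2 G"
  proof (rule subspace_eq_G_even[OF G])
    show "vec.dim G = CARD('n) - 1"
      using that(1) dim by simp
    then have "CARD('n) \<ge> 2"
      using \<open>vec.dim G \<ge> 1\<close> by linarith
    then show "axis i 1 \<notin> G" for i
      by (rule axis_notin_if_not_decomposable_Z2[OF assms(1) that(2)])
  qed
  show ?thesis
  proof (intro conjI impI)
    show "G = {0, ones_Z2}" if "dimZ2 G = 1"
      using subspace_eq_if_dim_1[OF G assms(2) ones_Z2_neq_0] that dim by simp
    show "G = UNIV" if "dimZ2 G = CARD('n)"
      using subspace_eq_UNIV_if_dim_eq_card[OF G] that dim by simp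
    show "decomposable_Z2 G" if "dimZ2 G = 2"
      using decomposable_Z2_if_dim_2[OF assms that] .
    show "G = G_even" and "even CARD('n)" if "dimZ2 G = CARD('n) - 1 \<and> \<not> decomposable_Z2 G"
      using G_eq_G_even that assms(2) ones_Z2_in_G_even_iff by auto
  qed
qed

end
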